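(* For every $x\in W_1$ one has $J\mathfrak{e}^L_xJ^{-1}=-q\,\mathfrak{i}^R_x$. Consequently, for $v\in W_{k+1}$ and $\underline i\in\Lambda_k$, $$(\mathfrak{i}^R_xv)_{\underline i}=\sum_{j\notin\underline i}(-q)^{L(j,\underline i\cup j)-1}\,\overline{x_j}\,v_{\underline i\cup j},$$ where $L(j,\underline i')$ denotes the position of $j$ in the string $\underline i'$.
   Context: $0<q<1$, $\ell\ge2$. $\Lambda_k$ = strictly increasing $k$-tuples in $\{1,\dots,\ell\}$, $W_k=\mathbb{C}^{\Lambda_k}$ ($W_0=\mathbb{C}$), inner product $\langle v,w\rangle=\sum_{\underline i}\overline{v_{\underline i}}w_{\underline i}$. For $\underline i'$ disjoint from $\underline i$, $\underline i\cup\underline i'$ is the ordered union; $\underline i\setminus j$ removes $j$; $|\underline i|=\sum_r i_r$; $\underline i^c$ is the complementary increasing tuple. Product $\wedge_q:W_h\otimes W_k\to W_{h+k}$ (zero if $h+k>\ell$): $(v\wedge_qw)_{\underline i}=\sum_{p}(-q^{-1})^{\|p\|}v_{i_{p(1)},\dots,i_{p(h)}}w_{i_{p(h+1)},\dots,i_{p(h+k)}}$, sum over permutations $p$ of $\{1,\dots,h+k\}$ increasing on $\{1..h\}$ and on $\{h+1..h+k\}$, $\|p\|$ = number of inversions (e.g. for $x\in W_1$, $w\in W_k$: $(x\wedge_q w)_{\underline i}=\sum_r(-q)^{1-r}x_{i_r}w_{\underline i\setminus i_r}$). For $x\in W_1$: $\mathfrak{e}^L_xw=x\wedge_qw$ and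 $\mathfrak{e}^R_xw=(-q)^kw\wedge_qx$ for $w\in W_k$; $\mathfrak{i}^R_x$ is the adjoint of $\mathfrak{e}^R_x$. $J:W_k\to W_{\ell-k}$ is the antilinear map $(Jw)_{\underline i}=(-q^{-1})^{|\underline i|}q^{\frac14\ell(\ell+1)}\overline{w_{\underline i^c}}$, and $J,\mathfrak{e}^L_x,\mathfrak{i}^R_x$ are regarded as operators on $\bigoplus_{k=0}^\ell W_k$. *)

theory Defs
  imports "HOL-Analysis.Analysis" "HOL-Combinatorics.Permutations"
begin

text \<open>Strictly increasing tuples in {1..l} are represented as strictly sorted lists.
  The direct sum of the W_k is represented by functions on nat lists that vanish
  outside the index set Lam l; W_k corresponds to those supported on lists of length k.\<close>

definition Lam :: "nat \<Rightarrow> nat list set" where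
  "Lam l = {i. sorted_wrt (<) i \<and> set i \<subseteq> {1..l}}"

definition Lamk :: "nat \<Rightarrow> nat \<Rightarrow> nat list set" where
  "Lamk l k = {i \<in> Lam l. length i = k}"

definition Vsp :: "nat \<Rightarrow> (nat list \<Rightarrow> complex) set" where
  "Vsp l = {v. \<forall>i. i \<notin> Lam l \<longrightarrow> v i = 0}"

definition Wk :: "nat \<Rightarrow> nat \<Rightarrow> (nat list \<Rightarrow> complex) set" where
  "Wk l k = {v \<in> Vsp l. \<forall>i. v i \<noteq> 0 \<longrightarrow> length i = k}"

definition ip :: "nat \<Rightarrow> (nat list \<Rightarrow> complex) \<Rightarrow> (nat list \<Rightarrow> complex) \<Rightarrow> complex" where
  "ip l v w = (\<Sum>i\<in>Lam l. cnj (v i) * w i)"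

definition shuffles :: "nat \<Rightarrow> nat \<Rightarrow> (nat \<Rightarrow> nat) set" where
  "shuffles h k = {p. p permutes {1..h+k} \<and> strict_mono_on {1..h} p \<and> strict_mono_on {h+1..h+k} p}"

definition inversions :: "nat \<Rightarrow> (nat \<Rightarrow> nat) \<Rightarrow> nat" where
  "inversions n p = card {(a,b). a \<in> {1..n} \<and> b \<in> {1..n} \<and> a < b \<and> p b < p a}"

text \<open>(v \<and>_q w)_i for v in W_h, w in W_k, i of length h+k.\<close>
definition wedge :: "real \<Rightarrow> nat \<Rightarrow> nat \<Rightarrow> (nat list \<Rightarrow> complex) \<Rightarrow> (nat list \<Rightarrow> complex)
    \<Rightarrow> nat list \<Rightarrow> complex" where
  "wedge q h k v w i = (\<Sum>p\<in>shuffles h k.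
     (- 1 / complex_of_real q) ^ inversions (h+k) p
     * v (map (\<lambda>r. i ! (p r - 1)) [1..<h+1])
     * w (map (\<lambda>r. i ! (p r - 1)) [h+1..<h+k+1]))"

definition eL :: "nat \<Rightarrow> real \<Rightarrow> (nat list \<Rightarrow> complex) \<Rightarrow> (nat list \<Rightarrow> complex) \<Rightarrow> nat list \<Rightarrow> complex" where
  "eL l q x w = (\<lambda>i. if i \<in> Lam l \<and> 1 \<le> length i then wedge q 1 (length i - 1) x w i else 0)"

definition eR :: "nat \<Rightarrow> real \<Rightarrow> (nat list \<Rightarrow> complex) \<Rightarrow> (nat list \<Rightarrow> complex) \<Rightarrow> nat list \<Rightarrow> complex" where
  "eR l q x w = (\<lambda>i. if i \<in> Lam l \<and> 1 \<le> length i
      then (- complex_of_real q) ^ (length i - 1) * wedge q (length i - 1) 1 w x i else 0)"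

definition compl :: "nat \<Rightarrow> nat list \<Rightarrow> nat list" where
  "compl l i = sorted_list_of_set ({1..l} - set i)"

definition Jop :: "nat \<Rightarrow> real \<Rightarrow> (nat list \<Rightarrow> complex) \<Rightarrow> nat list \<Rightarrow> complex" where
  "Jop l q w = (\<lambda>i. if i \<in> Lam l then
      (- 1 / complex_of_real q) ^ sum_list i * complex_of_real (q powr (real (l * (l + 1)) / 4))
      * cnj (w (compl l i)) else 0)"

text \<open>Position (1-based) of j in the string xs.\<close>
definition pos :: "nat \<Rightarrow> nat list \<Rightarrow> nat" where
  "pos j xs = length (takeWhile (\<lambda>a. a \<noteq> j) xs) + 1"

end

theory Submission
  imports Defs
begin

text \<open>For a single vector \<open>x\<close> the shuffles in \<open>x \<and>_q w\<close> and \<open>w \<and>_q x\<close> are indexed by the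
  slot \<open>r\<close> that \<open>x\<close> occupies, with \<open>r\<close> resp. \<open>k - r\<close> inversions, so both exterior
  multiplications are explicit sums over deletions of one entry. Testing the adjointness of
  \<open>iR\<close> against unit vectors gives its coordinate formula. Conjugation by \<open>J\<close> turns deleting
  the \<open>r\<close>-th entry \<open>j\<close> of the complement of \<open>i\<close> into inserting \<open>j\<close> into \<open>i\<close>; the powers of
  \<open>-1/q\<close> coming from \<open>J\<close> and from the shuffle signs then produce the same coefficients as
  \<open>-q iR\<close>, because \<open>j - 1\<close> is \<open>r\<close> plus the number of entries of \<open>i\<close> below \<open>j\<close>.\<close>

definition remove_nth :: "nat \<Rightarrow> 'a list \<Rightarrow> 'a list" where
  "remove_nth r xs = take r xs @ drop (Suc r) xs"

lemma length_remove_nth: "r < length xs \<Longrightarrow> length (remove_nth r xs) = length xs - 1"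
  by (simp add: remove_nth_def)

lemma nth_remove_nth:
  "r < length xs \<Longrightarrow> a < length xs - 1 \<Longrightarrow>
   remove_nth r xs ! a = (if a < r then xs ! a else xs ! Suc a)"
  by (auto simp: remove_nth_def nth_append min_def)

lemma set_remove_nth:
  assumes distinct: "distinct xs" and r: "r < length xs"
  shows "set (remove_nth r xs) = set xs - {xs ! r}"
proof -
  have split: "xs = take r xs @ xs ! r # drop (Suc r) xs"
    using r by (simp add: id_take_nth_drop)
  then have "xs ! r \<notin> set (take r xs) \<and> xs ! r \<notin> set (drop (Suc r) xs)"
    using distinct by (metis distinct_append distinct.simps(2) not_distinct_conv_prefix)
  moreover have "set xs = set (take r xs) \<union> {xs ! r} \<union> set (drop (Suc r) xs)"
    by (subst split) auto
  ultimately show ?thesis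
    by (auto simp: remove_nth_def)
qed

lemma sorted_remove_nth: "sorted_wrt (<) xs \<Longrightarrow> sorted_wrt (<) (remove_nth r xs)"
proof -
  assume sorted: "sorted_wrt (<) xs"
  then have "sorted_wrt (<) (take r xs @ drop r xs)" by simp
  moreover have "set (drop (Suc r) xs) \<subseteq> set (drop r xs)"
    by (simp add: set_drop_subset_set_drop)
  ultimately show ?thesis
    using sorted unfolding remove_nth_def sorted_wrt_append
    by (auto simp: sorted_wrt_drop sorted_wrt_take)
qed

lemma finite_Lam: "finite (Lam l)"
proof (rule inj_on_finite[where f = set and B = "Pow {1..l}"])
  show "inj_on set (Lam l)"
    by (auto simp: inj_on_def Lam_def intro: strict_sorted_equal)
qed (auto simp: Lam_def)

lemma sorted_compl: "sorted_wrt (<) (compl l i)"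
  and set_compl: "set (compl l i) = {1..l} - set i"
  by (simp_all add: compl_def strict_sorted_iff)

lemma compl_in_Lam: "compl l i \<in> Lam l"
  using set_compl[of l i] by (auto simp: Lam_def sorted_compl)

lemma compl_compl: "i \<in> Lam l \<Longrightarrow> compl l (compl l i) = i"
  by (intro strict_sorted_equal) (auto simp: Lam_def sorted_compl set_compl)

lemma strict_sorted_insort:
  "sorted_wrt (<) xs \<Longrightarrow> j \<notin> set xs \<Longrightarrow> sorted_wrt (<) (insort j xs)"
  by (simp add: strict_sorted_iff sorted_insort distinct_insort)

lemma insort_in_Lam: "i \<in> Lam l \<Longrightarrow> j \<in> {1..l} - set i \<Longrightarrow> insort j i \<in> Lam l"
  by (auto simp: Lam_def strict_sorted_insort set_insort_key)

lemma sum_list_insort: "sum_list (insort (j::'a::{linorder,comm_monoid_add}) xs) = j + sum_list xs"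
  by (induct xs) (auto simp: ac_simps)

lemma remove_nth_eq_iff:
  assumes xs: "sorted_wrt (<) xs" and i: "sorted_wrt (<) i" and r: "r < length xs"
  shows "remove_nth r xs = i \<longleftrightarrow> xs ! r \<notin> set i \<and> xs = insort (xs ! r) i"
proof -
  have set_xs: "set (remove_nth r xs) = set xs - {xs ! r}"
    using xs r by (simp add: set_remove_nth strict_sorted_iff)
  show ?thesis
  proof
    assume removed: "remove_nth r xs = i"
    then have fresh: "xs ! r \<notin> set i"
      using set_xs by auto
    moreover have "xs = insort (xs ! r) i"
    proof (rule strict_sorted_equal)
      show "sorted_wrt (<) (insort (xs ! r) i)"
        using i fresh by (rule strict_sorted_insort)
      show "set xs = set (insort (xs ! r) i)"
        using set_xs removed nth_mem[OF r] by (simp add: set_insort_key insert_absorb)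
    qed (rule xs)
    ultimately show "xs ! r \<notin> set i \<and> xs = insort (xs ! r) i" ..
  next
    assume "xs ! r \<notin> set i \<and> xs = insort (xs ! r) i"
    then have fresh: "xs ! r \<notin> set i" and "set xs = insert (xs ! r) (set i)"
      by (metis set_insort_key)+
    with set_xs have "set (remove_nth r xs) = set i"
      by auto
    then show "remove_nth r xs = i"
      using sorted_remove_nth[OF xs] i by (intro strict_sorted_equal) auto
  qed
qed

lemma card_less_nth_sorted:
  assumes sorted: "sorted_wrt (<) (xs :: nat list)" and r: "r < length xs"
  shows "card {a \<in> set xs. a < xs ! r} = r"
proof -
  have "{a \<in> set xs. a < xs ! r} = set (take r xs)"
  proof safe
    fix a assume "a \<in> set xs" "a < xs ! r"
    then obtain t where t: "t < length xs" "a = xs ! t"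
      by (auto simp: in_set_conv_nth)
    with \<open>a < xs ! r\<close> have "t < r"
      using sorted r unfolding sorted_wrt_iff_nth_less
      by (metis less_asym linorder_neqE_nat)
    with t r show "a \<in> set (take r xs)"
      by (auto simp: in_set_conv_nth)
  next
    fix a assume "a \<in> set (take r xs)"
    then show "a \<in> set xs" by (rule in_set_takeD)
    from \<open>a \<in> set (take r xs)\<close> obtain t where "t < r" "a = xs ! t"
      using r by (auto simp: in_set_conv_nth)
    with sorted r show "a < xs ! r"
      by (auto simp: sorted_wrt_iff_nth_less)
  qed
  then show ?thesis
    using sorted r by (simp add: distinct_card strict_sorted_iff)
qed

lemma pos_less_length: "j \<in> set xs \<Longrightarrow> pos j xs - 1 < length xs"
  by (induct xs) (auto simp: pos_def)

lemma nth_pos: "j \<in> set xs \<Longrightarrow> xs ! (pos j xs - 1) = j"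
  using nth_length_takeWhile[of "\<lambda>a. a \<noteq> j" xs] pos_less_length[of j xs]
  by (simp add: pos_def)

lemma strict_mono_on_eq_if_image_eq:
  fixes f g :: "'a::linorder \<Rightarrow> 'b::linorder"
  assumes "finite A" and "strict_mono_on A f" and "strict_mono_on A g"
    and "f ` A = g ` A" and "a \<in> A"
  shows "f a = g a"
proof -
  define xs where "xs = sorted_list_of_set A"
  have xs: "sorted_wrt (<) xs" "set xs = A"
    using assms(1) by (auto simp: xs_def)
  have "sorted_wrt (<) (map f xs)" and "sorted_wrt (<) (map g xs)"
    using assms(2,3) xs unfolding sorted_wrt_map
    by (auto intro!: sorted_wrt_mono_rel[OF _ xs(1)] simp: strict_mono_on_def)
  then have "map f xs = map g xs"
    using assms(4) xs(2) by (intro strict_sorted_equal) auto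
  then show ?thesis
    using assms(5) xs(2) by (metis map_eq_conv)
qed

lemma permutes_eq_if_strict_mono_off_point:
  fixes p p' :: "'a::linorder \<Rightarrow> 'a"
  assumes "finite S" and p: "p permutes S" and p': "p' permutes S" and "a \<in> S"
    and "p a = p' a"
    and "strict_mono_on (S - {a}) p" and "strict_mono_on (S - {a}) p'"
  shows "p = p'"
proof
  fix b
  have "p ` (S - {a}) = p' ` (S - {a})"
    using permutes_inj[OF p] permutes_inj[OF p'] \<open>p a = p' a\<close>
    by (simp add: image_set_diff permutes_image[OF p] permutes_image[OF p'])
  then show "p b = p' b"
    using assms strict_mono_on_eq_if_image_eq[of "S - {a}" p p' b]
    by (cases "b \<in> S") (auto simp: permutes_not_in)
qed

definition shuffle_front :: "nat \<Rightarrow> nat \<Rightarrow> nat" where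
  "shuffle_front r a = (if a = 1 then r else if 2 \<le> a \<and> a \<le> r then a - 1 else a)"

definition shuffle_back :: "nat \<Rightarrow> nat \<Rightarrow> nat \<Rightarrow> nat" where
  "shuffle_back k r a = (if a = k + 1 then r else if r \<le> a \<and> a \<le> k then a + 1 else a)"

lemma permutes_of_inj_on_endo:
  assumes "finite S" "inj_on p S" "p ` S \<subseteq> S" "\<And>a. a \<notin> S \<Longrightarrow> p a = a"
  shows "p permutes S"
  using assms by (intro bij_imp_permutes) (auto simp: bij_betw_def endo_inj_surj)

lemma shuffle_front_permutes: "r \<in> {1..k+1} \<Longrightarrow> shuffle_front r permutes {1..k+1}"
  by (rule permutes_of_inj_on_endo) (auto simp: shuffle_front_def inj_on_def split: if_splits)

lemma shuffle_back_permutes: "r \<in> {1..k+1} \<Longrightarrow> shuffle_back k r permutes {1..k+1}"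
  by (rule permutes_of_inj_on_endo) (auto simp: shuffle_back_def inj_on_def split: if_splits)

lemma strict_mono_on_shuffle_front: "strict_mono_on {2..k+1} (shuffle_front r)"
  by (auto simp: strict_mono_on_def shuffle_front_def)

lemma strict_mono_on_shuffle_back: "strict_mono_on {1..k} (shuffle_back k r)"
  by (auto simp: strict_mono_on_def shuffle_back_def)

lemma strict_mono_on_singleton: "strict_mono_on {a :: 'a :: preorder} f"
  by (simp add: strict_mono_on_def)

lemma shuffles_one_left: "shuffles 1 k = shuffle_front ` {1..k+1}"
proof (intro equalityI subsetI)
  have rest: "{1..k+1} - {1} = {2..k+1::nat}"
    by auto
  fix p assume "p \<in> shuffles 1 k"
  then have p: "p permutes {1..k+1}" and mono: "strict_mono_on ({1..k+1} - {1}) p"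
    unfolding rest by (simp_all add: shuffles_def numeral_2_eq_2)
  have r: "p 1 \<in> {1..k+1}"
    using permutes_in_image[OF p] by simp
  have "p = shuffle_front (p 1)"
  proof (rule permutes_eq_if_strict_mono_off_point[OF _ p shuffle_front_permutes[OF r] _ _ mono])
    show "strict_mono_on ({1..k+1} - {1}) (shuffle_front (p 1))"
      unfolding rest by (rule strict_mono_on_shuffle_front)
  qed (simp_all add: shuffle_front_def)
  with r show "p \<in> shuffle_front ` {1..k+1}" by blast
next
  fix p assume "p \<in> shuffle_front ` {1..k+1}"
  then obtain r where r: "r \<in> {1..k+1}" and "p = shuffle_front r" ..
  then show "p \<in> shuffles 1 k"
    using shuffle_front_permutes[OF r] strict_mono_on_shuffle_front[of k r]
    by (simp add: shuffles_def strict_mono_on_singleton numeral_2_eq_2)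
qed

lemma shuffles_one_right: "shuffles k 1 = shuffle_back k ` {1..k+1}"
proof (intro equalityI subsetI)
  have rest: "{1..k+1} - {k+1} = {1..k::nat}"
    by auto
  fix p assume "p \<in> shuffles k 1"
  then have p: "p permutes {1..k+1}" and mono: "strict_mono_on ({1..k+1} - {k+1}) p"
    unfolding rest by (simp_all add: shuffles_def)
  have r: "p (k+1) \<in> {1..k+1}"
    using permutes_in_image[OF p] by simp
  have "p = shuffle_back k (p (k+1))"
  proof (rule permutes_eq_if_strict_mono_off_point[OF _ p shuffle_back_permutes[OF r] _ _ mono])
    show "strict_mono_on ({1..k+1} - {k+1}) (shuffle_back k (p (k+1)))"
      unfolding rest by (rule strict_mono_on_shuffle_back)
  qed (simp_all add: shuffle_back_def)
  with r show "p \<in> shuffle_back k ` {1..k+1}" by blast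
next
  fix p assume "p \<in> shuffle_back k ` {1..k+1}"
  then obtain r where r: "r \<in> {1..k+1}" and "p = shuffle_back k r" ..
  then show "p \<in> shuffles k 1"
    using shuffle_back_permutes[OF r] strict_mono_on_shuffle_back[of k r]
    by (simp add: shuffles_def strict_mono_on_singleton)
qed

lemma inversions_shuffle_front: "r \<in> {1..k+1} \<Longrightarrow> inversions (1+k) (shuffle_front r) = r - 1"
proof -
  assume "r \<in> {1..k+1}"
  then have "{(a,b). a \<in> {1..1+k} \<and> b \<in> {1..1+k} \<and> a < b \<and> shuffle_front r b < shuffle_front r a}
      = {1} \<times> {2..r}"
    by (auto simp: shuffle_front_def split: if_splits)
  then show ?thesis by (simp add: inversions_def)
qed

lemma inversions_shuffle_back: "r \<in> {1..k+1} \<Longrightarrow> inversions (k+1) (shuffle_back k r) = k + 1 - r"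
proof -
  assume "r \<in> {1..k+1}"
  then have "{(a,b). a \<in> {1..k+1} \<and> b \<in> {1..k+1} \<and> a < b \<and> shuffle_back k r b < shuffle_back k r a}
      = {r..k} \<times> {k+1}"
    by (auto simp: shuffle_back_def split: if_splits)
  then show ?thesis by (simp add: inversions_def)
qed

lemma map_shuffle_front:
  assumes "length i = Suc k" "r < Suc k"
  shows "map (\<lambda>a. i ! (shuffle_front (Suc r) a - 1)) [Suc (Suc 0)..<Suc (Suc k)] = remove_nth r i"
  by (rule nth_equalityI)
    (use assms in \<open>auto simp: length_remove_nth nth_remove_nth shuffle_front_def simp del: upt_Suc\<close>)

lemma map_shuffle_back:
  assumes "length i = Suc k" "r < Suc k"
  shows "map (\<lambda>a. i ! (shuffle_back k (Suc r) a - 1)) [Suc 0..<Suc k] = remove_nth r i"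
  by (rule nth_equalityI)
    (use assms in \<open>auto simp: length_remove_nth nth_remove_nth shuffle_back_def simp del: upt_Suc\<close>)

lemma wedge_one_left:
  assumes "length i = Suc k"
  shows "wedge q 1 k x w i
    = (\<Sum>r<Suc k. (- 1 / complex_of_real q) ^ r * x [i ! r] * w (remove_nth r i))"
proof -
  have "inj_on shuffle_front {1..k+1}"
    by (rule inj_onI) (metis shuffle_front_def)
  then have "wedge q 1 k x w i = (\<Sum>r\<in>{1..k+1}.
      (- 1 / complex_of_real q) ^ inversions (1+k) (shuffle_front r)
      * x (map (\<lambda>a. i ! (shuffle_front r a - 1)) [1..<1+1])
      * w (map (\<lambda>a. i ! (shuffle_front r a - 1)) [1+1..<1+k+1]))"
    unfolding wedge_def shuffles_one_left by (simp add: sum.reindex)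
  also have "\<dots> = (\<Sum>r<Suc k. (- 1 / complex_of_real q) ^ inversions (1+k) (shuffle_front (Suc r))
      * x (map (\<lambda>a. i ! (shuffle_front (Suc r) a - 1)) [1..<1+1])
      * w (map (\<lambda>a. i ! (shuffle_front (Suc r) a - 1)) [1+1..<1+k+1]))"
    by (simp del: upt_Suc add: sum.atLeast1_atMost_eq)
  also have "\<dots> = (\<Sum>r<Suc k. (- 1 / complex_of_real q) ^ r * x [i ! r] * w (remove_nth r i))"
  proof (intro sum.cong refl)
    fix r assume "r \<in> {..<Suc k}"
    moreover have "map (\<lambda>a. i ! (shuffle_front (Suc r) a - 1)) [1..<1+1] = [i ! r]"
      by (simp add: shuffle_front_def)
    ultimately show "(- 1 / complex_of_real q) ^ inversions (1+k) (shuffle_front (Suc r))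
        * x (map (\<lambda>a. i ! (shuffle_front (Suc r) a - 1)) [1..<1+1])
        * w (map (\<lambda>a. i ! (shuffle_front (Suc r) a - 1)) [1+1..<1+k+1])
      = (- 1 / complex_of_real q) ^ r * x [i ! r] * w (remove_nth r i)"
      using inversions_shuffle_front[of "Suc r" k] map_shuffle_front[OF assms, of r] by simp
  qed
  finally show ?thesis .
qed

lemma wedge_one_right:
  assumes "length i = Suc k"
  shows "wedge q k 1 w x i
    = (\<Sum>r<Suc k. (- 1 / complex_of_real q) ^ (k - r) * w (remove_nth r i) * x [i ! r])"
proof -
  have "inj_on (shuffle_back k) {1..k+1}"
    by (rule inj_onI) (metis shuffle_back_def)
  then have "wedge q k 1 w x i = (\<Sum>r\<in>{1..k+1}.
      (- 1 / complex_of_real q) ^ inversions (k+1) (shuffle_back k r)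
      * w (map (\<lambda>a. i ! (shuffle_back k r a - 1)) [1..<k+1])
      * x (map (\<lambda>a. i ! (shuffle_back k r a - 1)) [k+1..<k+1+1]))"
    unfolding wedge_def shuffles_one_right by (simp add: sum.reindex)
  also have "\<dots> = (\<Sum>r<Suc k. (- 1 / complex_of_real q) ^ inversions (k+1) (shuffle_back k (Suc r))
      * w (map (\<lambda>a. i ! (shuffle_back k (Suc r) a - 1)) [1..<k+1])
      * x (map (\<lambda>a. i ! (shuffle_back k (Suc r) a - 1)) [k+1..<k+1+1]))"
    by (simp del: upt_Suc add: sum.atLeast1_atMost_eq)
  also have "\<dots> = (\<Sum>r<Suc k. (- 1 / complex_of_real q) ^ (k - r) * w (remove_nth r i) * x [i ! r])"
  proof (intro sum.cong refl)
    fix r assume "r \<in> {..<Suc k}"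
    moreover have "map (\<lambda>a. i ! (shuffle_back k (Suc r) a - 1)) [k+1..<k+1+1] = [i ! r]"
      by (simp add: shuffle_back_def)
    ultimately show "(- 1 / complex_of_real q) ^ inversions (k+1) (shuffle_back k (Suc r))
        * w (map (\<lambda>a. i ! (shuffle_back k (Suc r) a - 1)) [1..<k+1])
        * x (map (\<lambda>a. i ! (shuffle_back k (Suc r) a - 1)) [k+1..<k+1+1])
      = (- 1 / complex_of_real q) ^ (k - r) * w (remove_nth r i) * x [i ! r]"
      using inversions_shuffle_back[of "Suc r" k] map_shuffle_back[OF assms, of r] by simp
  qed
  finally show ?thesis .
qed

lemma eL_expand:
  assumes "m \<in> Lam l"
  shows "eL l q x w m = (\<Sum>r<length m. (- 1 / complex_of_real q) ^ r * x [m ! r] * w (remove_nth r m))"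
proof (cases "length m")
  case (Suc k)
  then show ?thesis
    using assms wedge_one_left[OF Suc, of q x w] by (simp add: eL_def del: sum.lessThan_Suc)
qed (simp add: eL_def)

lemma eR_expand:
  assumes "q \<noteq> 0" and "m \<in> Lam l"
  shows "eR l q x w m = (\<Sum>r<length m. (- complex_of_real q) ^ r * w (remove_nth r m) * x [m ! r])"
proof (cases "length m")
  case (Suc k)
  have power_identity:
    "(- complex_of_real q) ^ k * (- 1 / complex_of_real q) ^ (k - r) = (- complex_of_real q) ^ r"
    if "r < Suc k" for r
  proof -
    have "(- complex_of_real q) ^ k = (- complex_of_real q) ^ r * (- complex_of_real q) ^ (k - r)"
      using that by (simp flip: power_add)
    with \<open>q \<noteq> 0\<close> show ?thesis
      by (simp add: mult.assoc flip: power_mult_distrib)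
  qed
  have "eR l q x w m
      = (\<Sum>r<Suc k. (- complex_of_real q) ^ k * (- 1 / complex_of_real q) ^ (k - r)
          * w (remove_nth r m) * x [m ! r])"
    using assms(2) Suc wedge_one_right[OF Suc, of q w x]
    by (simp add: eR_def sum_distrib_left mult.assoc del: sum.lessThan_Suc)
  also have "\<dots> = (\<Sum>r<length m. (- complex_of_real q) ^ r * w (remove_nth r m) * x [m ! r])"
    using Suc power_identity by (intro sum.cong) auto
  finally show ?thesis .
qed (simp add: eR_def)

lemma eR_unit_vector_insort:
  assumes q: "q \<noteq> 0" and i: "i \<in> Lam l" and j: "j \<in> {1..l} - set i"
  shows "eR l q x (\<lambda>m. if m = i then 1 else 0) (insort j i)
    = (- complex_of_real q) ^ (pos j (insort j i) - 1) * x [j]"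
proof -
  define m where "m = insort j i"
  define r0 where "r0 = pos j m - 1"
  have m: "m \<in> Lam l" and sorted_i: "sorted_wrt (<) i"
    using insort_in_Lam[OF i j] i by (simp_all add: m_def Lam_def)
  have j_m: "j \<in> set m"
    by (simp add: m_def set_insort_key)
  have distinct_m: "distinct m"
    using m by (simp add: Lam_def strict_sorted_iff)
  have r0: "r0 < length m" "m ! r0 = j"
    using pos_less_length[OF j_m] nth_pos[OF j_m] by (simp_all add: r0_def)
  have removes_i: "remove_nth r m = i \<longleftrightarrow> r = r0" if "r < length m" for r
  proof -
    have "m ! r \<in> insert j (set i)"
      using nth_mem[OF that] by (simp add: m_def set_insort_key)
    then have "m ! r \<notin> set i \<and> m = insort (m ! r) i \<longleftrightarrow> m ! r = j"
      using j m_def by auto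
    also have "\<dots> \<longleftrightarrow> r = r0"
      using r0 that distinct_m by (metis nth_eq_iff_index_eq)
    finally show ?thesis
      using remove_nth_eq_iff[of m i r] that m sorted_i by (simp add: Lam_def)
  qed
  have "eR l q x (\<lambda>m. if m = i then 1 else 0) m
      = (\<Sum>r<length m. if r = r0 then (- complex_of_real q) ^ r * x [m ! r] else 0)"
    unfolding eR_expand[OF q m] by (intro sum.cong refl) (simp add: removes_i)
  also have "\<dots> = (- complex_of_real q) ^ r0 * x [j]"
    using r0 by simp
  finally show ?thesis
    by (simp add: m_def r0_def)
qed

lemma eR_unit_vector_other:
  assumes q: "q \<noteq> 0" and i: "i \<in> Lam l" and m: "m \<in> Lam l"
    and not_insort: "m \<notin> (\<lambda>j. insort j i) ` ({1..l} - set i)"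
  shows "eR l q x (\<lambda>m. if m = i then 1 else 0) m = 0"
proof -
  have sorted: "sorted_wrt (<) m" "sorted_wrt (<) i"
    using m i by (simp_all add: Lam_def)
  have "remove_nth r m \<noteq> i" if r: "r < length m" for r
  proof
    assume "remove_nth r m = i"
    then have "m ! r \<notin> set i" "m = insort (m ! r) i"
      using remove_nth_eq_iff[OF sorted r] by simp_all
    moreover have "m ! r \<in> {1..l}"
      using m nth_mem[OF r] unfolding Lam_def by blast
    ultimately show False
      using not_insort by blast
  qed
  then show ?thesis
    by (simp add: eR_expand[OF q m])
qed

lemma ip_unit_vector_right:
  "i \<in> Lam l \<Longrightarrow> ip l v (\<lambda>m. if m = i then 1 else 0) = cnj (v i)"
  by (simp add: ip_def finite_Lam if_distrib cong: if_cong)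

lemma adjoint_eR_coordinate:
  assumes q: "q \<noteq> 0"
    and iR_adj: "\<forall>v\<in>Vsp l. \<forall>w\<in>Vsp l. ip l (iR v) w = ip l v (eR l q x w)"
    and v: "v \<in> Vsp l" and i: "i \<in> Lam l"
  shows "iR v i = (\<Sum>j\<in>{1..l} - set i.
    (- complex_of_real q) ^ (pos j (insort j i) - 1) * cnj (x [j]) * v (insort j i))"
proof -
  define e where "e = (\<lambda>m. if m = i then (1::complex) else 0)"
  define T where "T = {1..l} - set i"
  define F where "F = (\<lambda>m. cnj (v m) * eR l q x e m)"
  have e: "e \<in> Vsp l"
    using i by (auto simp: e_def Vsp_def)
  have insort_T: "(\<lambda>j. insort j i) ` T \<subseteq> Lam l"
    using insort_in_Lam[OF i] by (auto simp: T_def)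
  have "inj_on (\<lambda>j. insort j i) T"
  proof (rule inj_onI)
    fix j j' assume "j \<in> T" "j' \<in> T" "insort j i = insort j' i"
    then have "insert j (set i) = insert j' (set i)"
      by (metis set_insort_key)
    with \<open>j \<in> T\<close> \<open>j' \<in> T\<close> show "j = j'"
      by (auto simp: T_def)
  qed
  have "cnj (iR v i) = ip l (iR v) e"
    using ip_unit_vector_right[OF i] by (simp add: e_def)
  also have "\<dots> = (\<Sum>m\<in>Lam l. F m)"
    using iR_adj v e by (simp add: ip_def F_def)
  also have "\<dots> = (\<Sum>m\<in>(\<lambda>j. insort j i) ` T. F m)"
    using eR_unit_vector_other[OF q i] by (intro sum.mono_neutral_right[OF finite_Lam insort_T])
      (auto simp: F_def e_def T_def)
  also have "\<dots> = (\<Sum>j\<in>T. cnj (v (insort j i)) * ((- complex_of_real q) ^ (pos j (insort j i) - 1) * x [j]))"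
    using \<open>inj_on (\<lambda>j. insort j i) T\<close> eR_unit_vector_insort[OF q i]
    by (simp add: sum.reindex F_def e_def T_def)
  finally have "iR v i = cnj (\<Sum>j\<in>T. cnj (v (insort j i))
      * ((- complex_of_real q) ^ (pos j (insort j i) - 1) * x [j]))"
    by (metis complex_cnj_cnj)
  then show ?thesis
    by (simp add: T_def cnj_sum mult.commute mult.left_commute)
qed

lemma Jop_surj_onto_Vsp:
  assumes "0 < q" and v: "v \<in> Vsp l"
  shows "v \<in> Jop l q ` Vsp l"
proof
  define c where "c = complex_of_real (q powr (real (l * (l + 1)) / 4))"
  have "c \<noteq> 0" "cnj c = c"
    using \<open>0 < q\<close> by (simp_all add: c_def)
  define u where "u = (\<lambda>n. if n \<in> Lam l
    then cnj (v (compl l n)) / ((- 1 / complex_of_real q) ^ sum_list (compl l n) * c) else 0)"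
  show "u \<in> Vsp l"
    by (simp add: Vsp_def u_def)
  show "v = Jop l q u"
  proof
    fix i
    show "v i = Jop l q u i"
      using v \<open>0 < q\<close> \<open>c \<noteq> 0\<close> \<open>cnj c = c\<close> compl_in_Lam[of l i] compl_compl[of i l]
      by (cases "i \<in> Lam l") (simp_all add: Jop_def u_def c_def Vsp_def)
  qed
qed

lemma compl_insort_nth_compl:
  assumes i: "i \<in> Lam l" and r: "r < length (compl l i)"
  shows "compl l (insort (compl l i ! r) i) = remove_nth r (compl l i)"
proof (rule strict_sorted_equal)
  have "set (remove_nth r (compl l i)) = set (compl l i) - {compl l i ! r}"
    using r sorted_compl[of l i] by (simp add: set_remove_nth strict_sorted_iff)
  then show "set (compl l (insort (compl l i ! r) i)) = set (remove_nth r (compl l i))"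
    by (auto simp: set_compl set_insort_key)
qed (simp_all add: sorted_compl sorted_remove_nth)

lemma nth_compl_eq_Suc_index_plus_pos:
  assumes i: "i \<in> Lam l" and r: "r < length (compl l i)"
  defines "j \<equiv> compl l i ! r"
  shows "j = Suc (r + (pos j (insort j i) - 1))"
proof -
  let ?m = "compl l i" and ?s = "pos j (insort j i) - 1"
  have j: "j \<in> {1..l} - set i"
    using nth_mem[OF r] by (simp add: j_def set_compl)
  have sorted_insort: "sorted_wrt (<) (insort j i)"
    using insort_in_Lam[OF i j] by (simp add: Lam_def)
  have j_insort: "j \<in> set (insort j i)"
    by (simp add: set_insort_key)
  have "card {a \<in> set (insort j i). a < j} = ?s"
    using card_less_nth_sorted[OF sorted_insort pos_less_length[OF j_insort]] nth_pos[OF j_insort]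
    by simp
  moreover have "{a \<in> set (insort j i). a < j} = {a \<in> set i. a < j}"
    by (auto simp: set_insort_key)
  ultimately have "card {a \<in> set i. a < j} = ?s"
    by simp
  moreover have "card {a \<in> set ?m. a < j} = r"
    using card_less_nth_sorted[OF sorted_compl r] by (simp add: j_def)
  moreover have "{a \<in> set i. a < j} \<union> {a \<in> set ?m. a < j} = {1..<j}"
    using i j by (auto simp: set_compl Lam_def)
  moreover have "{a \<in> set i. a < j} \<inter> {a \<in> set ?m. a < j} = {}"
    by (auto simp: set_compl)
  ultimately have "card {1..<j} = ?s + r"
    by (metis (no_types, lifting) card_Un_disjoint finite_Un finite_atLeastLessThan)
  then show ?thesis
    using j by simp arith
qed

lemma neg_power_mult_neg_inverse_power:
  fixes z :: "'a :: field"
  assumes "z \<noteq> 0"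
  shows "- z * (- z) ^ s * (- 1 / z) ^ Suc (r + s) = (- 1 / z) ^ r"
proof -
  have "- z * (- z) ^ s * (- 1 / z) ^ Suc (r + s) = (- 1 / z) ^ r * (- z * (- 1 / z)) ^ Suc s"
    by (simp only: power_add power_mult_distrib power_Suc add_Suc_right mult_ac)
  also have "\<dots> = (- 1 / z) ^ r"
    using assms by simp
  finally show ?thesis .
qed

lemma Jop_eL_coordinate:
  assumes q: "0 < q" and i: "i \<in> Lam l"
  shows "Jop l q (eL l q x u) i = - complex_of_real q * (\<Sum>j\<in>{1..l} - set i.
    (- complex_of_real q) ^ (pos j (insort j i) - 1) * cnj (x [j]) * Jop l q u (insort j i))"
proof -
  define a where "a = - 1 / complex_of_real q"
  define c where "c = complex_of_real (q powr (real (l * (l + 1)) / 4))"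
  define m where "m = compl l i"
  define G where "G = (\<lambda>j. - complex_of_real q * ((- complex_of_real q) ^ (pos j (insort j i) - 1)
    * cnj (x [j]) * Jop l q u (insort j i)))"
  have "cnj a = a" "cnj c = c"
    by (simp_all add: a_def c_def)
  have m: "m \<in> Lam l" "distinct m" "set m = {1..l} - set i"
    using compl_in_Lam[of l i] sorted_compl[of l i]
    by (simp_all add: m_def set_compl strict_sorted_iff)
  have summand: "a ^ sum_list i * c * cnj (a ^ r * x [m ! r] * u (remove_nth r m)) = G (m ! r)"
    if r: "r < length m" for r
  proof -
    define j where "j = m ! r"
    have j: "j \<in> {1..l} - set i"
      using nth_mem[OF r] m(3) by (simp add: j_def)
    have "Jop l q u (insort j i) = a ^ (j + sum_list i) * c * cnj (u (remove_nth r m))"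
      using insort_in_Lam[OF i j] compl_insort_nth_compl[OF i] r
      by (simp add: Jop_def a_def c_def j_def m_def sum_list_insort)
    moreover have "j = Suc (r + (pos j (insort j i) - 1))"
      using nth_compl_eq_Suc_index_plus_pos[OF i] r by (simp add: j_def m_def)
    ultimately have "G j = (- complex_of_real q * (- complex_of_real q) ^ (pos j (insort j i) - 1)
        * a ^ Suc (r + (pos j (insort j i) - 1))) * a ^ sum_list i * c * cnj (x [j]) * cnj (u (remove_nth r m))"
      by (simp add: G_def power_add mult_ac)
    also have "\<dots> = a ^ sum_list i * c * cnj (a ^ r * x [m ! r] * u (remove_nth r m))"
      using q neg_power_mult_neg_inverse_power[of "complex_of_real q" "pos j (insort j i) - 1" r]
        \<open>cnj a = a\<close> by (simp add: a_def j_def mult_ac)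
    finally show ?thesis
      by (simp add: j_def)
  qed
  have "Jop l q (eL l q x u) i = a ^ sum_list i * c * cnj (eL l q x u m)"
    using i by (simp add: Jop_def a_def c_def m_def)
  also have "\<dots> = (\<Sum>r<length m. a ^ sum_list i * c * cnj (a ^ r * x [m ! r] * u (remove_nth r m)))"
    by (simp add: eL_expand[OF m(1)] a_def cnj_sum sum_distrib_left)
  also have "\<dots> = (\<Sum>j\<in>set m. G j)"
    using summand m(2) by (simp add: sum_list_sum_nth atLeast0LessThan flip: sum_list_distinct_conv_sum_set)
  finally show ?thesis
    by (simp add: m(3) G_def sum_distrib_left)
qed

theorem proposition3p11:
  fixes l :: nat and q :: real
    and x :: "nat list \<Rightarrow> complex"
    and iR :: "(nat list \<Rightarrow> complex) \<Rightarrow> nat list \<Rightarrow> complex"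
  assumes "0 < q" and "q < 1" and "2 \<le> l"
    and x: "x \<in> Wk l 1"
    and iR_maps: "\<forall>v\<in>Vsp l. iR v \<in> Vsp l"
    and iR_adj: "\<forall>v\<in>Vsp l. \<forall>w\<in>Vsp l. ip l (iR v) w = ip l v (eR l q x w)"
  shows "(\<forall>v\<in>Vsp l. Jop l q (eL l q x (inv_into (Vsp l) (Jop l q) v))
            = (\<lambda>i. - complex_of_real q * iR v i))
      \<and> (\<forall>k v i. v \<in> Wk l (Suc k) \<longrightarrow> i \<in> Lamk l k \<longrightarrow>
            iR v i = (\<Sum>j\<in>{1..l} - set i.
               (- complex_of_real q) ^ (pos j (insort j i) - 1) * cnj (x [j]) * v (insort j i)))"
proof
  have q: "q \<noteq> 0"
    using \<open>0 < q\<close> by simp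
  note iR_coordinate = adjoint_eR_coordinate[OF q iR_adj]
  show "\<forall>v\<in>Vsp l. Jop l q (eL l q x (inv_into (Vsp l) (Jop l q) v))
      = (\<lambda>i. - complex_of_real q * iR v i)"
  proof (intro ballI ext)
    fix v i assume v: "v \<in> Vsp l"
    define u where "u = inv_into (Vsp l) (Jop l q) v"
    have "Jop l q u = v"
      using Jop_surj_onto_Vsp[OF \<open>0 < q\<close> v] by (simp add: u_def f_inv_into_f)
    then show "Jop l q (eL l q x u) i = - complex_of_real q * iR v i"
      using iR_maps v Jop_eL_coordinate[OF \<open>0 < q\<close>, of i l x u] iR_coordinate[OF v, of i]
      by (cases "i \<in> Lam l") (auto simp: Jop_def Vsp_def)
  qed
  show "\<forall>k v i. v \<in> Wk l (Suc k) \<longrightarrow> i \<in> Lamk l k \<longrightarrow>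
      iR v i = (\<Sum>j\<in>{1..l} - set i.
        (- complex_of_real q) ^ (pos j (insort j i) - 1) * cnj (x [j]) * v (insort j i))"
    using iR_coordinate by (simp add: Wk_def Lamk_def)
qed

end
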